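(* Let $D$ be a square-free integer and let $\mathbb{Z}[\sqrt{D}]$ denote the ring of integers of $\mathbb{Q}(\sqrt{D})$. Let $A\in\mathbb{M}_2(\mathbb{Z}[\sqrt{D}])$ be a singular matrix. If $A$ is similar (via an invertible matrix in $\mathbb{M}_2(\mathbb{Z}[\sqrt{D}])$) to a matrix having at least one row or column whose entries generate a principal ideal of $\mathbb{Z}[\sqrt{D}]$, then $A$ is a column--row matrix.
   Context: A matrix $M\in\mathbb{M}_2(R)$ is called column--row if there exist $a,b,c,d\in R$ such that $M=\begin{pmatrix} a&0\\ b&0\end{pmatrix}\begin{pmatrix} c&d\\ 0&0\end{pmatrix}$. $\mathbb{Z}[\sqrt{D}]=\{a+b\sqrt{D}:a,b\in\mathbb{Z}\}$ if $D\equiv 2,3 \pmod 4$ and $\{\frac{a+b\sqrt{D}}{2}:a\equiv b \pmod 2\}$ if $D\equiv 1\pmod 4$. *)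

theory Defs
  imports "HOL-Analysis.Analysis" "HOL-Computational_Algebra.Squarefree"
begin

definition sqrtD :: "int \<Rightarrow> complex" where
  "sqrtD D = (if D \<ge> 0 then complex_of_real (sqrt (of_int D))
              else \<i> * complex_of_real (sqrt (of_int (- D))))"

definition quad_int_ring :: "int \<Rightarrow> complex set" where
  "quad_int_ring D =
     (if D mod 4 = 1
      then {(of_int a + of_int b * sqrtD D) / 2 | a b. a mod 2 = b mod 2}
      else {of_int a + of_int b * sqrtD D | a b. True})"

definition in_mat :: "complex set \<Rightarrow> complex^2^2 \<Rightarrow> bool" where
  "in_mat R A = (\<forall>i j. A $ i $ j \<in> R)"

definition invertible_over :: "complex set \<Rightarrow> complex^2^2 \<Rightarrow> complex^2^2 \<Rightarrow> bool" where
  "invertible_over R P Q = (in_mat R P \<and> in_mat R Q \<and> P ** Q = mat 1 \<and> Q ** P = mat 1)"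

definition ideal_gen2 :: "complex set \<Rightarrow> complex \<Rightarrow> complex \<Rightarrow> complex set" where
  "ideal_gen2 R x y = {r * x + s * y | r s. r \<in> R \<and> s \<in> R}"

definition principal_ideal_in :: "complex set \<Rightarrow> complex set \<Rightarrow> bool" where
  "principal_ideal_in R I = (\<exists>g\<in>R. I = {r * g | r. r \<in> R})"

definition has_principal_line :: "complex set \<Rightarrow> complex^2^2 \<Rightarrow> bool" where
  "has_principal_line R B =
     ((\<exists>i. principal_ideal_in R (ideal_gen2 R (B $ i $ 1) (B $ i $ 2))) \<or>
      (\<exists>j. principal_ideal_in R (ideal_gen2 R (B $ 1 $ j) (B $ 2 $ j))))"

definition mat2 :: "complex \<Rightarrow> complex \<Rightarrow> complex \<Rightarrow> complex \<Rightarrow> complex^2^2" where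
  "mat2 a b c d = (\<chi> i j. if i = 1 then (if j = 1 then a else b) else (if j = 1 then c else d))"

definition column_row :: "complex set \<Rightarrow> complex^2^2 \<Rightarrow> bool" where
  "column_row R M = (\<exists>a\<in>R. \<exists>b\<in>R. \<exists>c\<in>R. \<exists>d\<in>R. M = mat2 a 0 b 0 ** mat2 c d 0 0)"

end

(* If the entries of a row (x, y) generate a principal ideal (g) with g \<noteq> 0, then
   (x, y) = g (a, b) with (a, b) unimodular, r a + s b = 1.  A second row (z, w) with
   x w - y z = 0 is then t (a, b) for t = r z + s w, so the matrix is the column (g, t)
   times the row (a, b); columns are handled symmetrically.  Being column-row survives
   multiplication on both sides by matrices over R, so it passes from P A Q back to
   A = Q (P A Q) P. *)

theory Submission
  imports Defs
begin

lemma sqrtD_squared: "sqrtD D * sqrtD D = of_int D"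
proof -
  have sq: "complex_of_real (sqrt r) * complex_of_real (sqrt r) = complex_of_real \<bar>r\<bar>" for r
    by (metis of_real_mult real_sqrt_mult_self)
  show ?thesis
    using sq[of "of_int D"] sq[of "of_int (- D)"]
    by (cases "D \<ge> 0") (auto simp: sqrtD_def algebra_simps)
qed

definition int_adjoin :: "complex \<Rightarrow> complex set" where
  "int_adjoin \<omega> = {of_int a + of_int b * \<omega> | a b. True}"

lemma int_adjoin_add:
  assumes "x \<in> int_adjoin \<omega>" "y \<in> int_adjoin \<omega>"
  shows "x + y \<in> int_adjoin \<omega>"
proof -
  obtain a b c d where "x = of_int a + of_int b * \<omega>" "y = of_int c + of_int d * \<omega>"
    using assms unfolding int_adjoin_def by blast
  then have "x + y = of_int (a + c) + of_int (b + d) * \<omega>"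
    by (simp add: algebra_simps)
  then show ?thesis unfolding int_adjoin_def by blast
qed

lemma int_adjoin_mult:
  assumes "\<omega> * \<omega> = of_int e * \<omega> + of_int f"
    and "x \<in> int_adjoin \<omega>" "y \<in> int_adjoin \<omega>"
  shows "x * y \<in> int_adjoin \<omega>"
proof -
  obtain a b c d where "x = of_int a + of_int b * \<omega>" "y = of_int c + of_int d * \<omega>"
    using assms(2,3) unfolding int_adjoin_def by blast
  then have "x * y = of_int a * of_int c + (of_int a * of_int d + of_int b * of_int c) * \<omega>
                     + of_int b * of_int d * (\<omega> * \<omega>)"
    by (simp add: algebra_simps)
  also have "\<dots> = of_int (a * c + b * d * f) + of_int (a * d + b * c + b * d * e) * \<omega>"
    unfolding assms(1) by (simp add: algebra_simps)
  finally show ?thesis unfolding int_adjoin_def by blast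
qed

lemma quad_int_ring_eq_int_adjoin:
  "quad_int_ring D = int_adjoin (if D mod 4 = 1 then (1 + sqrtD D) / 2 else sqrtD D)"
proof (cases "D mod 4 = 1")
  case True
  define \<omega> where "\<omega> = (1 + sqrtD D) / 2"
  have ring: "quad_int_ring D = {(of_int a + of_int b * sqrtD D) / 2 | a b. a mod 2 = b mod 2}"
    using True by (simp add: quad_int_ring_def)
  have "quad_int_ring D = int_adjoin \<omega>"
  proof (intro equalityI subsetI)
    fix x assume "x \<in> quad_int_ring D"
    then obtain a b where x: "x = (of_int a + of_int b * sqrtD D) / 2" and "a mod 2 = b mod 2"
      unfolding ring by blast
    then have "\<exists>k. a = b + 2 * k" by presburger
    then obtain k where "a = b + 2 * k" ..
    then have "x = of_int k + of_int b * \<omega>"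
      unfolding x \<omega>_def by (simp add: field_simps)
    then show "x \<in> int_adjoin \<omega>" unfolding int_adjoin_def by blast
  next
    fix x assume "x \<in> int_adjoin \<omega>"
    then obtain a b where "x = of_int a + of_int b * \<omega>"
      unfolding int_adjoin_def by blast
    then have "x = (of_int (2 * a + b) + of_int b * sqrtD D) / 2"
      unfolding \<omega>_def by (simp add: field_simps)
    moreover have "(2 * a + b) mod 2 = b mod 2" by simp
    ultimately show "x \<in> quad_int_ring D" unfolding ring by blast
  qed
  then show ?thesis using True by (simp add: \<omega>_def)
qed (simp add: quad_int_ring_def int_adjoin_def)

locale complex_subring =
  fixes R :: "complex set"
  assumes zero_mem: "0 \<in> R" and one_mem: "1 \<in> R"
    and add_mem: "x \<in> R \<Longrightarrow> y \<in> R \<Longrightarrow> x + y \<in> R"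
    and mult_mem: "x \<in> R \<Longrightarrow> y \<in> R \<Longrightarrow> x * y \<in> R"

lemma complex_subring_int_adjoin:
  assumes "\<omega> * \<omega> = of_int e * \<omega> + of_int f"
  shows "complex_subring (int_adjoin \<omega>)"
proof
  have "(0::complex) = of_int 0 + of_int 0 * \<omega>" "(1::complex) = of_int 1 + of_int 0 * \<omega>"
    by simp_all
  then show "0 \<in> int_adjoin \<omega>" "1 \<in> int_adjoin \<omega>"
    unfolding int_adjoin_def by blast+
qed (use assms in \<open>auto intro: int_adjoin_add int_adjoin_mult\<close>)

lemma complex_subring_quad_int_ring: "complex_subring (quad_int_ring D)"
proof (cases "D mod 4 = 1")
  case True
  then have "\<exists>n. D = 4 * n + 1" by presburger
  then obtain n where n: "D = 4 * n + 1" ..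
  define \<omega> where "\<omega> = (1 + sqrtD D) / 2"
  have "\<omega> * \<omega> = (1 + 2 * sqrtD D + sqrtD D * sqrtD D) / 4"
    unfolding \<omega>_def by (simp add: field_simps)
  also have "\<dots> = of_int 1 * \<omega> + of_int n"
    unfolding sqrtD_squared \<omega>_def n by (simp add: field_simps)
  finally have "complex_subring (int_adjoin \<omega>)"
    by (rule complex_subring_int_adjoin)
  then show ?thesis
    using True by (simp add: quad_int_ring_eq_int_adjoin \<omega>_def)
next
  case False
  have "sqrtD D * sqrtD D = of_int 0 * sqrtD D + of_int D"
    by (simp add: sqrtD_squared)
  then have "complex_subring (int_adjoin (sqrtD D))"
    by (rule complex_subring_int_adjoin)
  then show ?thesis
    using False by (simp add: quad_int_ring_eq_int_adjoin)
qed

lemma exists_2: "(\<exists>i::2. P i) \<longleftrightarrow> P 1 \<or> P 2"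
  by (metis exhaust_2)

lemma mat2_entries: "M = mat2 (M$1$1) (M$1$2) (M$2$1) (M$2$2)"
  unfolding vec_eq_iff mat2_def by (auto simp: forall_2)

lemma mat2_column_mult_row:
  "mat2 a 0 b 0 ** mat2 c d 0 0 = mat2 (a * c) (a * d) (b * c) (b * d)"
  unfolding vec_eq_iff by (auto simp: matrix_matrix_mult_def sum_2 mat2_def forall_2)

context complex_subring
begin

lemma in_mat_mult:
  assumes "in_mat R A" "in_mat R B"
  shows "in_mat R (A ** B)"
  using assms unfolding in_mat_def by (auto simp: matrix_matrix_mult_def sum_2 add_mem mult_mem)

lemma column_row_outer_product:
  assumes "a \<in> R" "b \<in> R" "c \<in> R" "d \<in> R"
  shows "column_row R (mat2 (a * c) (a * d) (b * c) (b * d))"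
  using assms unfolding column_row_def mat2_column_mult_row by blast

lemma column_row_mult:
  assumes "column_row R B" "in_mat R Q" "in_mat R P"
  shows "column_row R (Q ** B ** P)"
proof -
  obtain a b c d where R: "a \<in> R" "b \<in> R" "c \<in> R" "d \<in> R"
    and B: "B = mat2 a 0 b 0 ** mat2 c d 0 0"
    using assms(1) unfolding column_row_def by blast
  define a' b' where "a' = Q$1$1 * a + Q$1$2 * b" and "b' = Q$2$1 * a + Q$2$2 * b"
  define c' d' where "c' = c * P$1$1 + d * P$2$1" and "d' = c * P$1$2 + d * P$2$2"
  have "Q ** B ** P = (Q ** mat2 a 0 b 0) ** (mat2 c d 0 0 ** P)"
    unfolding B by (simp add: matrix_mul_assoc)
  also have "\<dots> = mat2 a' 0 b' 0 ** mat2 c' d' 0 0"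
    unfolding a'_def b'_def c'_def d'_def vec_eq_iff
    by (auto simp: matrix_matrix_mult_def sum_2 mat2_def forall_2)
  finally have "Q ** B ** P = mat2 a' 0 b' 0 ** mat2 c' d' 0 0" .
  moreover have "a' \<in> R" "b' \<in> R" "c' \<in> R" "d' \<in> R"
    using R assms(2,3) unfolding in_mat_def a'_def b'_def c'_def d'_def
    by (simp_all add: add_mem mult_mem)
  ultimately show ?thesis unfolding column_row_def by blast
qed

lemma principal_ideal_gen2_generator:
  assumes "principal_ideal_in R (ideal_gen2 R x y)"
  obtains g a b r s where "g \<in> R" "a \<in> R" "b \<in> R" "r \<in> R" "s \<in> R"
    and "x = a * g" "y = b * g" "g = r * x + s * y"
proof -
  obtain g where g: "g \<in> R" "ideal_gen2 R x y = {r * g | r. r \<in> R}"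
    using assms unfolding principal_ideal_in_def by blast
  have "x \<in> ideal_gen2 R x y" "y \<in> ideal_gen2 R x y"
    unfolding ideal_gen2_def using zero_mem one_mem by force+
  then obtain a b where "a \<in> R" "x = a * g" "b \<in> R" "y = b * g"
    unfolding g(2) by blast
  moreover have "g \<in> ideal_gen2 R x y"
    unfolding g(2) using one_mem by force
  then obtain r s where "r \<in> R" "s \<in> R" "g = r * x + s * y"
    unfolding ideal_gen2_def by blast
  ultimately show thesis using that g(1) by blast
qed

lemma singular_principal_row_factor:
  assumes R: "x \<in> R" "y \<in> R" "z \<in> R" "w \<in> R"
    and singular: "x * w - y * z = 0"
    and principal: "principal_ideal_in R (ideal_gen2 R x y)"
  shows "\<exists>g\<in>R. \<exists>t\<in>R. \<exists>a\<in>R. \<exists>b\<in>R. x = g * a \<and> y = g * b \<and> z = t * a \<and> w = t * b"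
proof -
  obtain g a b r s where gabrs: "g \<in> R" "a \<in> R" "b \<in> R" "r \<in> R" "s \<in> R"
    and x: "x = a * g" and y: "y = b * g" and g: "g = r * x + s * y"
    using principal by (rule principal_ideal_gen2_generator)
  show ?thesis
  proof (cases "g = 0")
    case True
    then have "x = 0" "y = 0" using x y by auto
    then show ?thesis using R zero_mem one_mem by force
  next
    case False
    have "g * (r * a + s * b) = g * 1" using g x y by (simp add: algebra_simps)
    then have unimodular: "r * a + s * b = 1" using False by simp
    have "g * (a * w - b * z) = 0" using singular x y by (simp add: algebra_simps)
    then have cross: "a * w = b * z" using False by simp
    define t where "t = r * z + s * w"
    have "z = z * (r * a + s * b)" using unimodular by simp
    also have "\<dots> = r * z * a + s * (a * w)" using cross by (simp add: algebra_simps)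
    finally have z: "z = t * a" unfolding t_def by (simp add: algebra_simps)
    have "w = w * (r * a + s * b)" using unimodular by simp
    also have "\<dots> = r * (b * z) + s * w * b" using cross by (simp add: algebra_simps)
    finally have w: "w = t * b" unfolding t_def by (simp add: algebra_simps)
    have "t \<in> R" unfolding t_def using R gabrs by (simp add: add_mem mult_mem)
    then show ?thesis using x y z w gabrs by (metis mult.commute)
  qed
qed

lemma singular_principal_line_column_row:
  assumes "in_mat R B" "det B = 0" "has_principal_line R B"
  shows "column_row R B"
proof -
  define x y z w where "x = B$1$1" "y = B$1$2" "z = B$2$1" "w = B$2$2"
  have B: "B = mat2 x y z w" unfolding x_y_z_w_def by (rule mat2_entries)
  have R: "x \<in> R" "y \<in> R" "z \<in> R" "w \<in> R"
    using assms(1) unfolding in_mat_def x_y_z_w_def by auto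
  have det: "x * w - y * z = 0" using assms(2) unfolding det_2 x_y_z_w_def .
  from assms(3) consider
      "principal_ideal_in R (ideal_gen2 R x y)" | "principal_ideal_in R (ideal_gen2 R z w)"
    | "principal_ideal_in R (ideal_gen2 R x z)" | "principal_ideal_in R (ideal_gen2 R y w)"
    unfolding has_principal_line_def x_y_z_w_def exists_2 by blast
  then show ?thesis
  proof cases
    case 1
    with singular_principal_row_factor[OF R det] obtain g t a b
      where "g \<in> R" "t \<in> R" "a \<in> R" "b \<in> R" "x = g * a" "y = g * b" "z = t * a" "w = t * b"
      by blast
    then show ?thesis using column_row_outer_product[of g t a b] B by simp
  next
    case 2
    have "z * y - w * x = 0" using det by (simp add: algebra_simps)
    with 2 singular_principal_row_factor[OF R(3,4,1,2)] obtain g t a b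
      where "g \<in> R" "t \<in> R" "a \<in> R" "b \<in> R" "z = g * a" "w = g * b" "x = t * a" "y = t * b"
      by blast
    then show ?thesis using column_row_outer_product[of t g a b] B by simp
  next
    case 3
    have "x * w - z * y = 0" using det by (simp add: algebra_simps)
    with 3 singular_principal_row_factor[OF R(1,3,2,4)] obtain g t a b
      where "g \<in> R" "t \<in> R" "a \<in> R" "b \<in> R" "x = g * a" "z = g * b" "y = t * a" "w = t * b"
      by blast
    then show ?thesis using column_row_outer_product[of a b g t] B by (simp add: mult.commute)
  next
    case 4
    have "y * z - w * x = 0" using det by (simp add: algebra_simps)
    with 4 singular_principal_row_factor[OF R(2,4,1,3)] obtain g t a b
      where "g \<in> R" "t \<in> R" "a \<in> R" "b \<in> R" "y = g * a" "w = g * b" "x = t * a" "z = t * b"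
      by blast
    then show ?thesis using column_row_outer_product[of a b t g] B by (simp add: mult.commute)
  qed
qed

theorem column_row_if_similar_to_principal_line:
  assumes "in_mat R A" "det A = 0"
    and "invertible_over R P Q" "has_principal_line R (P ** A ** Q)"
  shows "column_row R A"
proof -
  have P: "in_mat R P" "Q ** P = mat 1" and Q: "in_mat R Q"
    using assms(3) unfolding invertible_over_def by auto
  have "in_mat R (P ** A ** Q)" using assms(1) P Q by (simp add: in_mat_mult)
  moreover have "det (P ** A ** Q) = 0" using assms(2) by (simp add: det_mul)
  ultimately have "column_row R (P ** A ** Q)"
    using assms(4) by (rule singular_principal_line_column_row)
  then have "column_row R (Q ** (P ** A ** Q) ** P)"
    using Q P(1) by (rule column_row_mult)
  also have "Q ** (P ** A ** Q) ** P = A"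
    using P(2) by (metis matrix_mul_assoc matrix_mul_lid matrix_mul_rid)
  finally show ?thesis .
qed

end

theorem proposition2p5:
  fixes D :: int and A :: "complex^2^2"
  assumes "squarefree D"
    and "in_mat (quad_int_ring D) A"
    and "det A = 0"
    and "\<exists>P Q. invertible_over (quad_int_ring D) P Q \<and>
               has_principal_line (quad_int_ring D) (P ** A ** Q)"
  shows "column_row (quad_int_ring D) A"
proof -
  interpret complex_subring "quad_int_ring D"
    by (rule complex_subring_quad_int_ring)
  from assms(4) obtain P Q where "invertible_over (quad_int_ring D) P Q"
      and "has_principal_line (quad_int_ring D) (P ** A ** Q)"
    by blast
  with assms(2,3) show ?thesis
    by (rule column_row_if_similar_to_principal_line)
qed

end
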